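(* Let $\varphi:[0,\infty)\to(0,\infty)$ be continuous and strictly increasing, let $W(x)=\exp(\varphi(|x|))$, and assume $\lim_{|t|\to\infty}t^k/W(t)=0$ for all $k\in\mathbb N$ and $\int_{-\infty}^\infty\frac{\log W(t)}{1+t^2}dt=\infty$. Let $A_n=\varphi^{-1}(n)$ and $E_n=E_n(\infty,W)$. Then there is a constant $C>0$ such that for all sufficiently large $n$, $$\log E_n\ge -C\left(\int_0^{A_n}\frac{\varphi(x)}{x^2+1}dx+\frac{n}{A_n}\right).$$
   Context: $\|f\|_{\infty,W}=\sup_{x\in\mathbb R}|f(x)/W(x)|$; $\mathcal P_m$ is the space of complex polynomials of degree at most $m$; $E_n(\infty,W)=\inf_{Q\in\mathcal P_{n-1}}\left\|\frac{1}{x-i}-Q(x)\right\|_{\infty,W}$. *)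

theory Defs
  imports "HOL-Analysis.Analysis" "HOL-Computational_Algebra.Polynomial"
begin

definition wnorm :: "(real \<Rightarrow> real) \<Rightarrow> (real \<Rightarrow> complex) \<Rightarrow> real" where
  "wnorm W f = (SUP x\<in>UNIV. cmod (f x) / W x)"

definition E_approx :: "(real \<Rightarrow> real) \<Rightarrow> nat \<Rightarrow> real" where
  "E_approx W n = (INF Q\<in>{Q :: complex poly. degree Q \<le> n - 1}.
      wnorm W (\<lambda>x. 1 / (complex_of_real x - \<i>) - poly Q (complex_of_real x)))"

end

theory Submission
  imports Defs "HOL-Complex_Analysis.Complex_Analysis"
begin

text \<open>Let \<open>Q\<close> have degree \<open>< n\<close> and weighted error \<open>w\<close>. Then \<open>p z = (z - \<i>) Q z - 1\<close> has
  degree \<open>\<le> n\<close>, \<open>p \<i> = -1\<close> and \<open>\<bar>p t\<bar> \<le> \<bar>t - \<i>\<bar> w W t\<close> on the real line. Put \<open>A = A\<^sub>n\<close> and let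
  \<open>\<Phi>\<close> be a finite sum of Cauchy kernels whose real part is nonnegative in the upper half-plane
  and dominates \<open>\<phi> \<bar>t\<bar>\<close> on \<open>[-A, A]\<close>. The function
  \<open>F z = p z (\<i> A / (z + \<i> A))\<^bsup>6n\<^esup> exp (- \<Phi> z) / (z + \<i>)\<close>
  is then bounded by \<open>w\<close> on the real line: on \<open>[-A, A]\<close> because \<open>exp (- \<Phi>)\<close> cancels the
  weight, outside because the damping factor beats the growth \<open>(2\<bar>t\<bar>/A)\<^sup>n exp n\<close> of \<open>p\<close>
  (Bernstein-Walsh, via the Joukowski map). As \<open>F\<close> decays in the upper half-plane, the
  maximum principle gives \<open>\<bar>F \<i>\<bar> \<le> w\<close>. Finally \<open>Re (\<Phi> \<i>)\<close> is a Riemann sum for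
  \<open>\<integral>\<^sub>0\<^sup>A \<phi> x / (x\<^sup>2 + 1) dx\<close> up to \<open>O(n / A)\<close>, and \<open>(A / (1 + A))\<^bsup>6n\<^esup> \<ge> exp (- 6n / A)\<close>.\<close>

lemma frontier_half_disc_subset:
  "frontier {z. cmod z < R \<and> Im z > 0} \<subseteq> {z. Im z \<ge> 0 \<and> (Im z = 0 \<or> cmod z = R)}"
proof
  define S where "S = {z. cmod z < R \<and> Im z > 0}"
  have "open S"
    unfolding S_def by (intro open_Collect_conj open_Collect_less continuous_intros)
  have closure_S: "closure S \<subseteq> {z. cmod z \<le> R \<and> Im z \<ge> 0}"
  proof (rule closure_minimal)
    show "closed {z. cmod z \<le> R \<and> Im z \<ge> 0}"
      by (intro closed_Collect_conj closed_Collect_le continuous_intros)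
  qed (auto simp: S_def)
  fix z
  assume "z \<in> frontier {z. cmod z < R \<and> Im z > 0}"
  then have "z \<in> closure S" "z \<notin> S"
    using \<open>open S\<close> by (auto simp: S_def[symmetric] frontier_def interior_open)
  then have "cmod z \<le> R" "Im z \<ge> 0" "\<not> (cmod z < R \<and> Im z > 0)"
    using closure_S by (auto simp: S_def)
  then show "z \<in> {z. Im z \<ge> 0 \<and> (Im z = 0 \<or> cmod z = R)}"
    by auto
qed

lemma halfplane_maximum_modulus:
  fixes F :: "complex \<Rightarrow> complex"
  assumes hol: "F holomorphic_on {z. Im z > -d}" and "d > 0"
    and real_bound: "\<And>t. cmod (F (of_real t)) \<le> B"
    and decay: "\<And>z. Im z \<ge> 0 \<Longrightarrow> cmod z \<ge> 1 \<Longrightarrow> cmod (F z) \<le> K / cmod z"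
    and "Im z0 > 0"
  shows "cmod (F z0) \<le> B"
proof (rule field_le_epsilon)
  fix e :: real
  assume "e > 0"
  have "B \<ge> 0"
    using real_bound[of 0] norm_ge_zero order_trans by blast
  define R where "R = max (cmod z0 + 1) (\<bar>K\<bar> / e)"
  have "R \<ge> 1" "cmod z0 < R" "\<bar>K\<bar> / e \<le> R"
    by (auto simp: R_def le_max_iff_disj)
  then have "K / R \<le> e"
    using \<open>e > 0\<close> by (auto simp: divide_le_eq mult.commute)
  define S where "S = {z. cmod z < R \<and> Im z > 0}"
  have "open S"
    unfolding S_def by (intro open_Collect_conj open_Collect_less continuous_intros)
  have frontier_S: "frontier S \<subseteq> {z. Im z \<ge> 0 \<and> (Im z = 0 \<or> cmod z = R)}"
    unfolding S_def by (rule frontier_half_disc_subset)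
  have "cmod (F z0) \<le> max B (K / R)"
  proof (rule maximum_modulus_frontier[of F S])
    have "S \<subseteq> {z. Im z > -d}"
      using \<open>d > 0\<close> by (auto simp: S_def)
    then show "F holomorphic_on interior S"
      using holomorphic_on_subset[OF hol] \<open>open S\<close> by (simp add: interior_open)
    have "closure S \<subseteq> {z. Im z > -d}"
      using closure_Un_frontier[of S] frontier_S \<open>d > 0\<close> by (force simp: S_def)
    then show "continuous_on (closure S) F"
      using holomorphic_on_imp_continuous_on[OF hol] continuous_on_subset by blast
    show "bounded S"
      by (rule bounded_subset[of "cball 0 R"]) (auto simp: S_def)
    show "z0 \<in> S"
      using \<open>cmod z0 < R\<close> \<open>Im z0 > 0\<close> by (simp add: S_def)
  next
    fix z
    assume "z \<in> frontier S"
    then have "Im z \<ge> 0" "Im z = 0 \<or> cmod z = R"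
      using frontier_S by auto
    then show "cmod (F z) \<le> max B (K / R)"
    proof (cases "Im z = 0")
      case True
      then have "z = of_real (Re z)"
        by (simp add: complex_eq_iff)
      then show ?thesis
        using real_bound[of "Re z"] by (metis max.coboundedI1)
    next
      case False
      then show ?thesis
        using decay[of z] \<open>Im z = 0 \<or> cmod z = R\<close> \<open>Im z \<ge> 0\<close> \<open>R \<ge> 1\<close> by simp
    qed
  qed
  then show "cmod (F z0) \<le> B + e"
    using \<open>K / R \<le> e\<close> \<open>B \<ge> 0\<close> \<open>e > 0\<close> by linarith
qed

lemma poly_eq_sum_coeff_atMost:
  fixes p :: "'a::comm_semiring_1 poly"
  assumes "degree p \<le> n"
  shows "poly p x = (\<Sum>k\<le>n. coeff p k * x ^ k)"
proof -
  have "poly p x = (\<Sum>k\<le>degree p. coeff p k * x ^ k)"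
    by (rule poly_altdef)
  also have "\<dots> = (\<Sum>k\<le>n. coeff p k * x ^ k)"
    using assms by (intro sum.mono_neutral_left) (auto simp: coeff_eq_0)
  finally show ?thesis .
qed

lemma norm_poly_le_coeff_sum:
  fixes p :: "'a::real_normed_field poly"
  assumes "degree p \<le> n"
  shows "norm (poly p x) \<le> (\<Sum>k\<le>n. norm (coeff p k)) * max 1 (norm x) ^ n"
proof -
  have "norm (poly p x) \<le> (\<Sum>k\<le>n. norm (coeff p k * x ^ k))"
    unfolding poly_eq_sum_coeff_atMost[OF assms] by (rule norm_sum)
  also have "\<dots> \<le> (\<Sum>k\<le>n. norm (coeff p k) * max 1 (norm x) ^ n)"
  proof (rule sum_mono)
    fix k
    assume "k \<in> {..n}"
    have "norm x ^ k \<le> max 1 (norm x) ^ k"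
      by (intro power_mono) auto
    also have "\<dots> \<le> max 1 (norm x) ^ n"
      using \<open>k \<in> {..n}\<close> by (intro power_increasing) auto
    finally show "norm (coeff p k * x ^ k) \<le> norm (coeff p k) * max 1 (norm x) ^ n"
      by (simp add: norm_mult norm_power mult_left_mono)
  qed
  also have "\<dots> = (\<Sum>k\<le>n. norm (coeff p k)) * max 1 (norm x) ^ n"
    by (simp add: sum_distrib_right)
  finally show ?thesis .
qed

lemma joukowski_preimage_pos:
  fixes A x :: real
  assumes "A > 0" "A \<le> x"
  obtains u where "u > 0" "u \<le> 1" "A / 2 * (u + 1 / u) = x" "1 / u \<le> 2 * x / A"
proof -
  define s where "s = sqrt (x\<^sup>2 - A\<^sup>2)"
  have "A\<^sup>2 \<le> x\<^sup>2"
    using assms by (intro power_mono) auto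
  then have "s \<ge> 0" "s\<^sup>2 = x\<^sup>2 - A\<^sup>2"
    by (auto simp: s_def)
  then have prod: "(x - s) * (x + s) = A\<^sup>2"
    by (simp add: algebra_simps power2_eq_square)
  have "s\<^sup>2 < x\<^sup>2"
    using \<open>s\<^sup>2 = x\<^sup>2 - A\<^sup>2\<close> \<open>A > 0\<close> by simp
  then have "s < x"
    using power2_less_imp_less[of s x] assms by simp
  have "(x - s) * (x + s) \<le> A * (x + s)"
    unfolding prod power2_eq_square using assms \<open>s \<ge> 0\<close> by (intro mult_left_mono) auto
  then have "x - s \<le> A"
    using \<open>s \<ge> 0\<close> assms by (simp add: mult_le_cancel_right_pos)
  define u where "u = (x - s) / A"
  have "x - s \<noteq> 0"
    using \<open>s < x\<close> by simp
  have inverse_u: "1 / u = (x + s) / A"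
    using frac_eq_eq[OF \<open>x - s \<noteq> 0\<close>, of A A "x + s"] prod \<open>A > 0\<close>
    by (simp add: u_def power2_eq_square mult.commute)
  show ?thesis
  proof
    show "u > 0" "u \<le> 1"
      using \<open>s < x\<close> \<open>x - s \<le> A\<close> \<open>A > 0\<close> by (auto simp: u_def)
    show "A / 2 * (u + 1 / u) = x"
      unfolding inverse_u using \<open>A > 0\<close> by (simp add: u_def field_simps)
    show "1 / u \<le> 2 * x / A"
      unfolding inverse_u using \<open>s < x\<close> \<open>A > 0\<close> by (intro divide_right_mono) auto
  qed
qed

lemma joukowski_real_preimage:
  fixes A t :: real
  assumes "A > 0" "A \<le> \<bar>t\<bar>"
  obtains u where "u \<noteq> 0" "\<bar>u\<bar> \<le> 1" "A / 2 * (u + 1 / u) = t" "1 / \<bar>u\<bar> \<le> 2 * \<bar>t\<bar> / A"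
proof (cases "t \<ge> 0")
  case True
  then obtain u where "u > 0" "u \<le> 1" "A / 2 * (u + 1 / u) = t" "1 / u \<le> 2 * \<bar>t\<bar> / A"
    using joukowski_preimage_pos[of A t] assms by auto
  then show ?thesis
    using that[of u] by simp
next
  case False
  then obtain u where u: "u > 0" "u \<le> 1" "A / 2 * (u + 1 / u) = - t" "1 / u \<le> 2 * \<bar>t\<bar> / A"
    using joukowski_preimage_pos[of A "- t"] assms by auto
  show ?thesis
  proof (rule that[of "- u"])
    have "A / 2 * (- u + 1 / (- u)) = - (A / 2 * (u + 1 / u))"
      by (simp add: algebra_simps)
    then show "A / 2 * (- u + 1 / (- u)) = t"
      using u(3) by simp
  qed (use u in auto)
qed

lemma poly_joukowski_eq:
  fixes p :: "'a::field poly"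
  assumes deg: "degree p \<le> n" and "u \<noteq> 0"
  shows "u ^ n * poly p (c * (u + 1 / u)) = (\<Sum>k\<le>n. coeff p k * c ^ k * (1 + u\<^sup>2) ^ k * u ^ (n - k))"
proof -
  have termwise: "u ^ n * (coeff p k * (c * (u + 1 / u)) ^ k) =
      coeff p k * c ^ k * (1 + u\<^sup>2) ^ k * u ^ (n - k)" if "k \<in> {..n}" for k
  proof -
    have split_power: "u ^ n = u ^ k * u ^ (n - k)"
      using that by (simp flip: power_add)
    have "u ^ n * (coeff p k * (c * (u + 1 / u)) ^ k) =
        coeff p k * c ^ k * ((u + 1 / u) * u) ^ k * u ^ (n - k)"
      by (simp only: split_power power_mult_distrib mult_ac)
    moreover have "(u + 1 / u) * u = 1 + u\<^sup>2"
      using \<open>u \<noteq> 0\<close> by (simp add: field_simps power2_eq_square)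
    ultimately show ?thesis
      by simp
  qed
  have "u ^ n * poly p (c * (u + 1 / u)) = (\<Sum>k\<le>n. u ^ n * (coeff p k * (c * (u + 1 / u)) ^ k))"
    by (simp add: poly_eq_sum_coeff_atMost[OF deg] sum_distrib_left)
  also have "\<dots> = (\<Sum>k\<le>n. coeff p k * c ^ k * (1 + u\<^sup>2) ^ k * u ^ (n - k))"
    by (rule sum.cong[OF refl termwise])
  finally show ?thesis .
qed

text \<open>The Joukowski map \<open>u \<mapsto> A/2 * (u + 1/u)\<close> sends the unit circle onto \<open>[-A, A]\<close>, and by
  \<open>poly_joukowski_eq\<close> the left-hand side below is a polynomial in \<open>u\<close>, so the maximum modulus
  principle applies on the unit disc.\<close>
lemma poly_joukowski_bound:
  fixes p :: "complex poly"
  assumes deg: "degree p \<le> n" and "A > 0"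
    and bound: "\<And>x::real. \<bar>x\<bar> \<le> A \<Longrightarrow> cmod (poly p (of_real x)) \<le> M"
    and "u \<noteq> 0" and "cmod u \<le> 1"
  shows "cmod (u ^ n * poly p (of_real A / 2 * (u + 1 / u))) \<le> M"
proof -
  define H where "H v = (\<Sum>k\<le>n. coeff p k * (of_real A / 2) ^ k * (1 + v\<^sup>2) ^ k * v ^ (n - k))"
    for v :: complex
  have "cmod (H u) \<le> M"
  proof (rule maximum_modulus_frontier[of H "cball 0 1"])
    show "H holomorphic_on interior (cball 0 1)" "continuous_on (closure (cball 0 1)) H"
      unfolding H_def by (intro holomorphic_intros continuous_intros)+
  next
    fix z :: complex
    assume "z \<in> frontier (cball 0 1)"
    then have "cmod z = 1"
      by (simp add: frontier_cball)
    then have z: "cnj z * z = 1" "z \<noteq> 0"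
      by (auto simp: complex_norm_square[symmetric] mult.commute)
    then have "1 / z = cnj z"
      by (simp add: field_simps)
    then have "of_real A / 2 * (z + 1 / z) = of_real (A * Re z)"
      by (simp add: complex_add_cnj)
    moreover have "\<bar>A * Re z\<bar> \<le> A"
      using \<open>A > 0\<close> abs_Re_le_cmod[of z] \<open>cmod z = 1\<close> by (simp add: abs_mult)
    ultimately have "cmod (poly p (of_real A / 2 * (z + 1 / z))) \<le> M"
      using bound by metis
    then show "cmod (H z) \<le> M"
      using poly_joukowski_eq[OF deg z(2), of "of_real A / 2", symmetric] \<open>cmod z = 1\<close>
      by (simp add: H_def norm_mult norm_power)
  qed (use \<open>cmod u \<le> 1\<close> in auto)
  then show ?thesis
    using poly_joukowski_eq[OF deg \<open>u \<noteq> 0\<close>, of "of_real A / 2"] by (simp add: H_def)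
qed

lemma poly_growth_outside_interval:
  fixes p :: "complex poly"
  assumes deg: "degree p \<le> n" and "A > 0"
    and bound: "\<And>x::real. \<bar>x\<bar> \<le> A \<Longrightarrow> cmod (poly p (of_real x)) \<le> M"
    and "A \<le> \<bar>t\<bar>"
  shows "cmod (poly p (of_real t)) \<le> M * (2 * \<bar>t\<bar> / A) ^ n"
proof -
  have "M \<ge> 0"
    using bound[of 0] \<open>A > 0\<close> by (metis abs_zero less_imp_le norm_ge_zero order_trans)
  obtain u where u: "u \<noteq> 0" "\<bar>u\<bar> \<le> 1" "A / 2 * (u + 1 / u) = t" "1 / \<bar>u\<bar> \<le> 2 * \<bar>t\<bar> / A"
    using joukowski_real_preimage[OF \<open>A > 0\<close> \<open>A \<le> \<bar>t\<bar>\<close>] .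
  then have "complex_of_real (A / 2 * (u + 1 / u)) = of_real t"
    by simp
  then have "of_real A / 2 * (of_real u + 1 / of_real u) = (of_real t :: complex)"
    by simp
  then have "\<bar>u\<bar> ^ n * cmod (poly p (of_real t)) \<le> M"
    using poly_joukowski_bound[OF deg \<open>A > 0\<close> bound, of "of_real u"] u by (simp add: norm_mult norm_power)
  then have "cmod (poly p (of_real t)) \<le> M * (1 / \<bar>u\<bar>) ^ n"
    using u(1) by (simp add: field_simps power_divide)
  also have "\<dots> \<le> M * (2 * \<bar>t\<bar> / A) ^ n"
    using u \<open>M \<ge> 0\<close> by (intro mult_left_mono power_mono) auto
  finally show ?thesis .
qed

lemma power_le_const_times_weight:
  fixes \<phi> :: "real \<Rightarrow> real"
  assumes nonneg: "\<And>x. x \<ge> 0 \<Longrightarrow> \<phi> x \<ge> 0"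
    and growth: "((\<lambda>t. t ^ k / exp (\<phi> \<bar>t\<bar>)) \<longlongrightarrow> 0) at_infinity"
  obtains B where "B > 0" "\<And>t. \<bar>t\<bar> ^ k \<le> B * exp (\<phi> \<bar>t\<bar>)"
proof -
  have "\<forall>\<^sub>F t in at_infinity. dist (t ^ k / exp (\<phi> \<bar>t\<bar>)) 0 < 1"
    using tendstoD[OF growth, of 1] by simp
  then obtain R where R: "\<And>t::real. R \<le> norm t \<Longrightarrow> dist (t ^ k / exp (\<phi> \<bar>t\<bar>)) 0 < 1"
    unfolding eventually_at_infinity by blast
  show ?thesis
  proof
    show "0 < max 1 (\<bar>R\<bar> ^ k)"
      by simp
    fix t :: real
    have "1 \<le> exp (\<phi> \<bar>t\<bar>)"
      using nonneg[of "\<bar>t\<bar>"] by simp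
    show "\<bar>t\<bar> ^ k \<le> max 1 (\<bar>R\<bar> ^ k) * exp (\<phi> \<bar>t\<bar>)"
    proof (cases "R \<le> \<bar>t\<bar>")
      case True
      then have "\<bar>t\<bar> ^ k \<le> exp (\<phi> \<bar>t\<bar>)"
        using R[of t] by (simp add: abs_divide power_abs)
      also have "\<dots> \<le> max 1 (\<bar>R\<bar> ^ k) * exp (\<phi> \<bar>t\<bar>)"
        using mult_right_mono[OF max.cobounded1[of 1 "\<bar>R\<bar> ^ k"], of "exp (\<phi> \<bar>t\<bar>)"] by simp
      finally show ?thesis .
    next
      case False
      then have "\<bar>t\<bar> ^ k \<le> max 1 (\<bar>R\<bar> ^ k)"
        by (intro order_trans[OF power_mono max.cobounded2]) auto
      also have "\<dots> \<le> max 1 (\<bar>R\<bar> ^ k) * exp (\<phi> \<bar>t\<bar>)"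
        using mult_left_mono[OF \<open>1 \<le> exp (\<phi> \<bar>t\<bar>)\<close>, of "max 1 (\<bar>R\<bar> ^ k)"] by simp
      finally show ?thesis .
    qed
  qed
qed

lemma unbounded_of_weight_growth:
  fixes \<phi> :: "real \<Rightarrow> real"
  assumes nonneg: "\<And>x. x \<ge> 0 \<Longrightarrow> \<phi> x \<ge> 0"
    and growth: "((\<lambda>t. t / exp (\<phi> \<bar>t\<bar>)) \<longlongrightarrow> 0) at_infinity"
  shows "\<exists>b\<ge>0. y \<le> \<phi> b"
proof (rule ccontr)
  assume "\<not> (\<exists>b\<ge>0. y \<le> \<phi> b)"
  then have less: "\<phi> b < y" if "b \<ge> 0" for b
    using that by force
  obtain B where "B > 0" and B: "\<And>t. \<bar>t\<bar> ^ 1 \<le> B * exp (\<phi> \<bar>t\<bar>)"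
    using power_le_const_times_weight[where \<phi> = \<phi> and k = 1, OF nonneg] growth by auto
  define t where "t = B * exp y"
  have "t > 0"
    using \<open>B > 0\<close> by (simp add: t_def)
  then have "t \<le> B * exp (\<phi> t)"
    using B[of t] by simp
  also have "\<dots> < t"
    using less[of t] \<open>t > 0\<close> \<open>B > 0\<close> by (simp add: t_def)
  finally show False
    by simp
qed

lemma bdd_above_weighted_error:
  fixes \<phi> :: "real \<Rightarrow> real" and Q :: "complex poly"
  assumes nonneg: "\<And>x. x \<ge> 0 \<Longrightarrow> \<phi> x \<ge> 0"
    and growth: "((\<lambda>t. t ^ degree Q / exp (\<phi> \<bar>t\<bar>)) \<longlongrightarrow> 0) at_infinity"
  shows "bdd_above ((\<lambda>x. cmod (1 / (of_real x - \<i>) - poly Q (of_real x)) / exp (\<phi> \<bar>x\<bar>)) ` UNIV)"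
proof -
  define S where "S = (\<Sum>k\<le>degree Q. cmod (coeff Q k))"
  obtain B where "B > 0" and B: "\<And>t. \<bar>t\<bar> ^ degree Q \<le> B * exp (\<phi> \<bar>t\<bar>)"
    using power_le_const_times_weight[OF nonneg growth] by blast
  show ?thesis
  proof (rule bdd_aboveI2)
    fix t :: real
    have "1 \<le> exp (\<phi> \<bar>t\<bar>)"
      using nonneg[of "\<bar>t\<bar>"] by simp
    have "1 \<le> cmod (of_real t - \<i>)"
      by (simp add: cmod_def)
    then have recip_le: "cmod (1 / (of_real t - \<i>)) \<le> 1"
      by (simp add: norm_divide divide_le_eq_1)
    have "max 1 \<bar>t\<bar> ^ degree Q \<le> (1 + B) * exp (\<phi> \<bar>t\<bar>)"
    proof (cases "\<bar>t\<bar> \<le> 1")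
      case True
      have "1 * 1 \<le> (1 + B) * exp (\<phi> \<bar>t\<bar>)"
        using \<open>1 \<le> exp (\<phi> \<bar>t\<bar>)\<close> \<open>B > 0\<close> by (intro mult_mono) auto
      moreover have "max 1 \<bar>t\<bar> = 1"
        using True by simp
      ultimately show ?thesis
        by simp
    next
      case False
      have "\<bar>t\<bar> ^ degree Q \<le> (1 + B) * exp (\<phi> \<bar>t\<bar>)"
        unfolding distrib_right using B[of t] \<open>1 \<le> exp (\<phi> \<bar>t\<bar>)\<close> by linarith
      with False show ?thesis
        by (simp add: max_def)
    qed
    then have "S * max 1 \<bar>t\<bar> ^ degree Q \<le> S * ((1 + B) * exp (\<phi> \<bar>t\<bar>))"
      by (intro mult_left_mono) (simp_all add: S_def sum_nonneg)
    then have poly_le: "cmod (poly Q (of_real t)) \<le> S * ((1 + B) * exp (\<phi> \<bar>t\<bar>))"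
      using norm_poly_le_coeff_sum[of Q "degree Q" "of_real t"] by (simp add: S_def)
    have "(1 + S * (1 + B)) * exp (\<phi> \<bar>t\<bar>) = exp (\<phi> \<bar>t\<bar>) + S * ((1 + B) * exp (\<phi> \<bar>t\<bar>))"
      by (simp add: algebra_simps)
    then have "cmod (1 / (of_real t - \<i>) - poly Q (of_real t)) \<le> (1 + S * (1 + B)) * exp (\<phi> \<bar>t\<bar>)"
      using norm_triangle_ineq4[of "1 / (of_real t - \<i>)" "poly Q (of_real t)"]
        recip_le poly_le \<open>1 \<le> exp (\<phi> \<bar>t\<bar>)\<close>
      by linarith
    then show "cmod (1 / (of_real t - \<i>) - poly Q (of_real t)) / exp (\<phi> \<bar>t\<bar>) \<le> 1 + S * (1 + B)"
      by (simp add: divide_le_eq)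
  qed
qed

lemma norm_le_wnorm:
  assumes "bdd_above ((\<lambda>x. cmod (f x) / W x) ` UNIV)"
  shows "cmod (f t) / W t \<le> wnorm W f"
  unfolding wnorm_def using assms by (rule cSUP_upper[rotated]) simp

lemma the_preimage_strict_mono_on:
  fixes \<phi> :: "real \<Rightarrow> real"
  assumes cont: "continuous_on {0..} \<phi>" and mono: "strict_mono_on {0..} \<phi>"
    and "\<phi> 0 \<le> y" and "\<exists>b\<ge>0. y \<le> \<phi> b"
  shows "(THE a. a \<ge> 0 \<and> \<phi> a = y) \<ge> 0 \<and> \<phi> (THE a. a \<ge> 0 \<and> \<phi> a = y) = y"
proof (rule theI')
  obtain b where "b \<ge> 0" "y \<le> \<phi> b"
    using assms(4) by blast
  moreover have "continuous_on {0..b} \<phi>"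
    using cont by (rule continuous_on_subset) auto
  ultimately obtain a where "a \<ge> 0" "\<phi> a = y"
    using IVT'[of \<phi> 0 y b] \<open>\<phi> 0 \<le> y\<close> by auto
  moreover have "a' = a" if "a' \<ge> 0" "\<phi> a' = y" for a'
    using strict_mono_on_eqD[OF mono, of a a'] that \<open>a \<ge> 0\<close> \<open>\<phi> a = y\<close> by simp
  ultimately show "\<exists>!a. a \<ge> 0 \<and> \<phi> a = y"
    by blast
qed

definition cauchy_kernel :: "real \<Rightarrow> complex \<Rightarrow> complex" where
  "cauchy_kernel a z = \<i> / (z + of_real a + \<i>)"

lemma Re_cauchy_kernel:
  "Re (cauchy_kernel a z) = (Im z + 1) / ((Re z + a)\<^sup>2 + (Im z + 1)\<^sup>2)"
  unfolding cauchy_kernel_def by (simp add: Re_divide complex_norm_square[symmetric] cmod_power2)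

lemma Re_cauchy_kernel_of_real: "Re (cauchy_kernel a (of_real t)) = 1 / ((t + a)\<^sup>2 + 1)"
  by (simp add: Re_cauchy_kernel)

lemma Re_cauchy_kernel_nonneg: "Im z \<ge> 0 \<Longrightarrow> Re (cauchy_kernel a z) \<ge> 0"
  unfolding Re_cauchy_kernel by (intro divide_nonneg_nonneg) auto

text \<open>Capping the weights at \<open>\<phi> A\<close> keeps the two terms with \<open>m \<ge> \<lfloor>A\<rfloor>\<close> of size
  \<open>O(\<phi> A / A)\<close> at \<open>\<i>\<close>.\<close>
definition phi_majorant :: "(real \<Rightarrow> real) \<Rightarrow> real \<Rightarrow> complex \<Rightarrow> complex" where
  "phi_majorant \<phi> A z = (\<Sum>m\<le>nat \<lfloor>A\<rfloor> + 1.
      of_real (2 * \<phi> (min (real m) A)) * (cauchy_kernel (- real m) z + cauchy_kernel (real m) z))"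

lemma Re_phi_majorant:
  "Re (phi_majorant \<phi> A z) = (\<Sum>m\<le>nat \<lfloor>A\<rfloor> + 1.
      2 * \<phi> (min (real m) A) * (Re (cauchy_kernel (- real m) z) + Re (cauchy_kernel (real m) z)))"
  unfolding phi_majorant_def by (simp add: Re_sum)

lemma holomorphic_phi_majorant: "phi_majorant \<phi> A holomorphic_on {z. Im z > -1}"
  unfolding phi_majorant_def[abs_def] cauchy_kernel_def
  by (intro holomorphic_intros) (auto simp: complex_eq_iff)

lemma Re_phi_majorant_nonneg:
  assumes "\<And>x. x \<ge> 0 \<Longrightarrow> \<phi> x \<ge> 0" and "A \<ge> 0" and "Im z \<ge> 0"
  shows "Re (phi_majorant \<phi> A z) \<ge> 0"
  unfolding Re_phi_majorant using assms Re_cauchy_kernel_nonneg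
  by (intro sum_nonneg mult_nonneg_nonneg add_nonneg_nonneg) auto

lemma Re_phi_majorant_ii:
  "Re (phi_majorant \<phi> A \<i>) = (\<Sum>m\<le>nat \<lfloor>A\<rfloor> + 1. 8 * \<phi> (min (real m) A) / ((real m)\<^sup>2 + 4))"
  unfolding Re_phi_majorant Re_cauchy_kernel by (intro sum.cong refl) (simp add: field_simps)

lemma half_le_poisson_pair:
  fixes t m :: real
  assumes "\<bar>t\<bar> \<le> m" "m < \<bar>t\<bar> + 1"
  shows "1 / 2 \<le> 1 / ((t - m)\<^sup>2 + 1) + 1 / ((t + m)\<^sup>2 + 1)"
proof -
  have half: "1 / 2 \<le> 1 / (x\<^sup>2 + 1)" if "\<bar>x\<bar> \<le> 1" for x :: real
    by (intro frac_le) (use that abs_square_le_1[of x] in \<open>auto intro: add_nonneg_pos\<close>)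
  have "\<bar>t - m\<bar> \<le> 1 \<or> \<bar>t + m\<bar> \<le> 1"
    using assms by (cases "t \<ge> 0") (auto simp: abs_if)
  then have "1 / 2 \<le> 1 / ((t - m)\<^sup>2 + 1) \<or> 1 / 2 \<le> 1 / ((t + m)\<^sup>2 + 1)"
    using half by blast
  moreover have "0 \<le> 1 / ((t - m)\<^sup>2 + 1)" "0 \<le> 1 / ((t + m)\<^sup>2 + 1)"
    by (intro divide_nonneg_nonneg add_nonneg_nonneg; simp)+
  ultimately show ?thesis
    by linarith
qed

lemma phi_le_Re_phi_majorant:
  fixes \<phi> :: "real \<Rightarrow> real"
  assumes mono: "\<And>x y. 0 \<le> x \<Longrightarrow> x \<le> y \<Longrightarrow> \<phi> x \<le> \<phi> y"
    and nonneg: "\<And>x. x \<ge> 0 \<Longrightarrow> \<phi> x \<ge> 0" and "\<bar>t\<bar> \<le> A"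
  shows "\<phi> \<bar>t\<bar> \<le> Re (phi_majorant \<phi> A (of_real t))"
proof -
  define m where "m = nat \<lceil>\<bar>t\<bar>\<rceil>"
  define c where "c j = 2 * \<phi> (min (real j) A) *
      (Re (cauchy_kernel (- real j) (of_real t)) + Re (cauchy_kernel (real j) (of_real t)))" for j
  have "\<lceil>\<bar>t\<bar>\<rceil> \<le> \<lfloor>A\<rfloor> + 1"
    unfolding ceiling_le_iff using \<open>\<bar>t\<bar> \<le> A\<close> real_of_int_floor_add_one_ge[of A] by linarith
  then have "m \<le> nat (\<lfloor>A\<rfloor> + 1)"
    unfolding m_def by (rule nat_mono)
  moreover have "nat (\<lfloor>A\<rfloor> + 1) = nat \<lfloor>A\<rfloor> + 1"
    using \<open>\<bar>t\<bar> \<le> A\<close> abs_ge_zero[of t] by (simp add: nat_add_distrib del: abs_ge_zero)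
  ultimately have "m \<in> {..nat \<lfloor>A\<rfloor> + 1}"
    by simp
  moreover have "\<bar>t\<bar> \<le> real m" "real m < \<bar>t\<bar> + 1"
    unfolding m_def by linarith+
  ultimately have m: "\<bar>t\<bar> \<le> real m" "real m < \<bar>t\<bar> + 1" "m \<in> {..nat \<lfloor>A\<rfloor> + 1}"
    by simp_all
  have c_nonneg: "c j \<ge> 0" for j
    unfolding c_def using nonneg \<open>\<bar>t\<bar> \<le> A\<close> Re_cauchy_kernel_nonneg[of "of_real t"]
    by (intro mult_nonneg_nonneg add_nonneg_nonneg) auto
  have "1 / 2 \<le> 1 / ((t - real m)\<^sup>2 + 1) + 1 / ((t + real m)\<^sup>2 + 1)"
    using m by (intro half_le_poisson_pair) auto
  then have "2 * \<phi> (min (real m) A) * (1 / 2) \<le>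
      2 * \<phi> (min (real m) A) * (1 / ((t - real m)\<^sup>2 + 1) + 1 / ((t + real m)\<^sup>2 + 1))"
    using nonneg \<open>\<bar>t\<bar> \<le> A\<close> by (intro mult_left_mono) auto
  moreover have "\<phi> \<bar>t\<bar> \<le> \<phi> (min (real m) A)"
    using mono m \<open>\<bar>t\<bar> \<le> A\<close> by simp
  ultimately have "\<phi> \<bar>t\<bar> \<le> c m"
    by (simp add: c_def Re_cauchy_kernel_of_real)
  also have "\<dots> \<le> Re (phi_majorant \<phi> A (of_real t))"
    unfolding Re_phi_majorant c_def[symmetric] using m c_nonneg by (intro member_le_sum) auto
  finally show ?thesis .
qed

lemma integrable_phi_weight:
  fixes \<phi> :: "real \<Rightarrow> real"
  assumes "continuous_on {0..} \<phi>" and "0 \<le> a"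
  shows "(\<lambda>x. \<phi> x / (x\<^sup>2 + 1)) integrable_on {a..b}"
proof (rule integrable_continuous_interval)
  have "continuous_on {a..b} \<phi>"
    using assms by (auto intro: continuous_on_subset)
  moreover have "x\<^sup>2 + 1 \<noteq> 0" for x :: real
    using zero_le_power2[of x] by linarith
  ultimately show "continuous_on {a..b} (\<lambda>x. \<phi> x / (x\<^sup>2 + 1))"
    by (intro continuous_intros) auto
qed

lemma integral_phi_weight_mono:
  fixes \<phi> :: "real \<Rightarrow> real"
  assumes cont: "continuous_on {0..} \<phi>" and nonneg: "\<And>x. x \<ge> 0 \<Longrightarrow> \<phi> x \<ge> 0"
    and "b \<le> c"
  shows "integral {0..b} (\<lambda>x. \<phi> x / (x\<^sup>2 + 1)) \<le> integral {0..c} (\<lambda>x. \<phi> x / (x\<^sup>2 + 1))"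
proof (rule integral_subset_le)
  show "(\<lambda>x. \<phi> x / (x\<^sup>2 + 1)) integrable_on {0..b}" "(\<lambda>x. \<phi> x / (x\<^sup>2 + 1)) integrable_on {0..c}"
    by (auto intro: integrable_phi_weight[OF cont])
  show "\<forall>x\<in>{0..c}. 0 \<le> \<phi> x / (x\<^sup>2 + 1)"
    using nonneg by (auto intro: divide_nonneg_nonneg)
qed (use \<open>b \<le> c\<close> in auto)

lemma sum_le_integral_phi_weight:
  fixes \<phi> :: "real \<Rightarrow> real"
  assumes cont: "continuous_on {0..} \<phi>"
    and mono: "\<And>x y. 0 \<le> x \<Longrightarrow> x \<le> y \<Longrightarrow> \<phi> x \<le> \<phi> y"
    and nonneg: "\<And>x. x \<ge> 0 \<Longrightarrow> \<phi> x \<ge> 0"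
  shows "(\<Sum>m<J. \<phi> (real m) / ((real m + 1)\<^sup>2 + 1)) \<le> integral {0..real J} (\<lambda>x. \<phi> x / (x\<^sup>2 + 1))"
proof (induction J)
  case (Suc J)
  let ?f = "\<lambda>x. \<phi> x / (x\<^sup>2 + 1)"
  have "\<phi> (real J) / ((real J + 1)\<^sup>2 + 1) \<le> ?f x" if "x \<in> {real J..real (Suc J)}" for x
  proof -
    have "x\<^sup>2 \<le> (real J + 1)\<^sup>2"
      using that by (intro power_mono) auto
    then show ?thesis
      using that nonneg[of x] mono[of "real J" x] by (intro frac_le) (auto intro: add_nonneg_pos)
  qed
  then have "integral {real J..real (Suc J)} (\<lambda>x. \<phi> (real J) / ((real J + 1)\<^sup>2 + 1))
      \<le> integral {real J..real (Suc J)} ?f"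
    by (intro integral_le integrable_const_ivl integrable_phi_weight[OF cont]) auto
  moreover have "integral {0..real J} ?f + integral {real J..real (Suc J)} ?f = integral {0..real (Suc J)} ?f"
    by (intro Henstock_Kurzweil_Integration.integral_combine integrable_phi_weight[OF cont]) auto
  ultimately show ?case
    using Suc.IH by simp
qed simp

lemma integral_phi_weight_ge:
  fixes \<phi> :: "real \<Rightarrow> real"
  assumes cont: "continuous_on {0..} \<phi>"
    and mono: "\<And>x y. 0 \<le> x \<Longrightarrow> x \<le> y \<Longrightarrow> \<phi> x \<le> \<phi> y"
    and nonneg: "\<And>x. x \<ge> 0 \<Longrightarrow> \<phi> x \<ge> 0" and "1 \<le> A"
  shows "\<phi> 0 / 2 \<le> integral {0..A} (\<lambda>x. \<phi> x / (x\<^sup>2 + 1))"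
proof -
  have "\<phi> 0 / 2 \<le> integral {0..real 1} (\<lambda>x. \<phi> x / (x\<^sup>2 + 1))"
    using sum_le_integral_phi_weight[OF cont mono nonneg, of 1] by simp
  also have "\<dots> \<le> integral {0..A} (\<lambda>x. \<phi> x / (x\<^sup>2 + 1))"
    using integral_phi_weight_mono[OF cont nonneg] \<open>1 \<le> A\<close> by simp
  finally show ?thesis .
qed

lemma poisson_weight_le_shifted:
  fixes x :: real
  shows "8 / (x\<^sup>2 + 4) \<le> 16 / ((x + 1)\<^sup>2 + 1)"
proof -
  have "8 * ((x + 1)\<^sup>2 + 1) \<le> 16 * (x\<^sup>2 + 4)"
    using zero_le_power2[of "x - 1"] by (simp add: power2_eq_square algebra_simps)
  moreover have "0 < x\<^sup>2 + 4" "0 < (x + 1)\<^sup>2 + 1"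
    by (auto intro: add_nonneg_pos)
  ultimately show ?thesis
    by (simp add: field_simps)
qed

lemma le_square_add_4:
  fixes A x :: real
  assumes "1 \<le> A" "A - 1 \<le> x"
  shows "A \<le> x\<^sup>2 + 4"
proof -
  have "(A - 1)\<^sup>2 \<le> x\<^sup>2"
    using assms by (intro power_mono) auto
  moreover have "A \<le> (A - 1)\<^sup>2 + 4"
    using zero_le_power2[of "A - 3 / 2"] by (simp add: power2_eq_square algebra_simps)
  ultimately show ?thesis
    by linarith
qed

lemma Re_phi_majorant_ii_le:
  fixes \<phi> :: "real \<Rightarrow> real"
  assumes cont: "continuous_on {0..} \<phi>"
    and mono: "\<And>x y. 0 \<le> x \<Longrightarrow> x \<le> y \<Longrightarrow> \<phi> x \<le> \<phi> y"
    and nonneg: "\<And>x. x \<ge> 0 \<Longrightarrow> \<phi> x \<ge> 0" and "1 \<le> A"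
  shows "Re (phi_majorant \<phi> A \<i>) \<le> 16 * integral {0..A} (\<lambda>x. \<phi> x / (x\<^sup>2 + 1)) + 16 * \<phi> A / A"
proof -
  define J where "J = nat \<lfloor>A\<rfloor>"
  define g where "g m = 8 * \<phi> (min (real m) A) / ((real m)\<^sup>2 + 4)" for m :: nat
  have J: "real J \<le> A" "A < real J + 1"
    unfolding J_def using \<open>1 \<le> A\<close> by linarith+
  have head: "g m \<le> 16 * (\<phi> (real m) / ((real m + 1)\<^sup>2 + 1))" if "m < J" for m
  proof -
    have "min (real m) A = real m"
      using that J by simp
    then show ?thesis
      using mult_right_mono[OF poisson_weight_le_shifted[of "real m"] nonneg[of "real m"]]
      by (simp add: g_def)
  qed
  have tail: "g m \<le> 8 * (\<phi> A / A)" if "J \<le> m" for m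
  proof -
    have "g m \<le> 8 * \<phi> A / ((real m)\<^sup>2 + 4)"
      unfolding g_def using mono[of "min (real m) A" A] \<open>1 \<le> A\<close> by (intro divide_right_mono) auto
    also have "\<dots> \<le> 8 * \<phi> A / A"
      using le_square_add_4[of A "real m"] that J \<open>1 \<le> A\<close> nonneg[of A]
      by (intro divide_left_mono) auto
    finally show ?thesis
      by simp
  qed
  have "(\<Sum>m<J. g m) \<le> 16 * (\<Sum>m<J. \<phi> (real m) / ((real m + 1)\<^sup>2 + 1))"
    unfolding sum_distrib_left using head by (intro sum_mono) auto
  also have "\<dots> \<le> 16 * integral {0..real J} (\<lambda>x. \<phi> x / (x\<^sup>2 + 1))"
    using sum_le_integral_phi_weight[OF cont mono nonneg] by simp
  also have "\<dots> \<le> 16 * integral {0..A} (\<lambda>x. \<phi> x / (x\<^sup>2 + 1))"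
    using integral_phi_weight_mono[OF cont nonneg J(1)] by simp
  finally have "(\<Sum>m<J. g m) \<le> 16 * integral {0..A} (\<lambda>x. \<phi> x / (x\<^sup>2 + 1))" .
  moreover have "Re (phi_majorant \<phi> A \<i>) = (\<Sum>m<J. g m) + g J + g (J + 1)"
    by (simp add: Re_phi_majorant_ii g_def J_def lessThan_Suc_atMost[symmetric])
  moreover have "16 * \<phi> A / A = 8 * (\<phi> A / A) + 8 * (\<phi> A / A)"
    by simp
  ultimately show ?thesis
    using tail[of J] tail[of "J + 1"] by linarith
qed

lemma exp_1_mult_le_sum_squares_cube:
  fixes A x :: real
  assumes "0 < A" "A \<le> x"
  shows "exp 1 * (2 * x * A ^ 5) \<le> (x\<^sup>2 + A\<^sup>2) ^ 3"
proof -
  have "exp 1 * (2 * x * A ^ 5) \<le> 4 * (2 * x * A ^ 5)"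
    using exp_le assms by (intro mult_right_mono) auto
  also have "\<dots> = (2 * x * A) * (2 * A\<^sup>2)\<^sup>2"
    by (simp add: power2_eq_square eval_nat_numeral mult_ac)
  also have "\<dots> \<le> (x\<^sup>2 + A\<^sup>2) * (x\<^sup>2 + A\<^sup>2)\<^sup>2"
  proof (intro mult_mono power_mono)
    show "2 * x * A \<le> x\<^sup>2 + A\<^sup>2"
      using zero_le_power2[of "x - A"] by (simp add: power2_eq_square algebra_simps)
    show "2 * A\<^sup>2 \<le> x\<^sup>2 + A\<^sup>2"
      using assms power_mono[of A x 2] by simp
  qed (use assms in auto)
  also have "\<dots> = (x\<^sup>2 + A\<^sup>2) ^ 3"
    by (simp add: power2_eq_square power3_eq_cube)
  finally show ?thesis .
qed

lemma damping_absorbs_growth: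
  fixes A x :: real
  assumes "0 < A" "A \<le> x"
  shows "(2 * x / A) ^ n * (A / sqrt (x\<^sup>2 + A\<^sup>2)) ^ (6 * n) \<le> exp (- real n)"
proof -
  define Y where "Y = x\<^sup>2 + A\<^sup>2"
  have "0 < Y"
    using \<open>0 < A\<close> by (simp add: Y_def add_nonneg_pos)
  have "sqrt Y ^ 6 = (sqrt Y ^ 2) ^ 3"
    by (simp flip: power_mult)
  also have "\<dots> = Y ^ 3"
    using \<open>0 < Y\<close> by simp
  finally have "(2 * x / A) * (A / sqrt Y) ^ 6 = 2 * x * (A * A ^ 5) / (A * Y ^ 3)"
    by (simp add: power_divide flip: power_Suc)
  also have "\<dots> = 2 * x * A ^ 5 / Y ^ 3"
    using \<open>0 < A\<close> by simp
  also have "\<dots> \<le> exp (- 1)"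
    using exp_1_mult_le_sum_squares_cube[OF assms, folded Y_def] \<open>0 < Y\<close>
    by (simp add: exp_minus divide_le_eq field_simps)
  finally have base: "(2 * x / A) * (A / sqrt Y) ^ 6 \<le> exp (- 1)" .
  have "(2 * x / A) ^ n * (A / sqrt Y) ^ (6 * n) = ((2 * x / A) * (A / sqrt Y) ^ 6) ^ n"
    by (simp only: power_mult power_mult_distrib)
  also have "\<dots> \<le> exp (- 1) ^ n"
    using base \<open>0 < A\<close> \<open>A \<le> x\<close> by (intro power_mono) auto
  also have "\<dots> = exp (- real n)"
    by (simp flip: exp_of_nat_mult)
  finally show ?thesis
    by (simp add: Y_def)
qed

lemma poly_damped_outside_interval:
  fixes p :: "complex poly"
  assumes deg: "degree p \<le> n" and "0 < A"
    and bound: "\<And>x::real. \<bar>x\<bar> \<le> A \<Longrightarrow> cmod (poly p (of_real x)) \<le> M"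
    and "A \<le> \<bar>t\<bar>"
  shows "cmod (poly p (of_real t)) * (A / sqrt (t\<^sup>2 + A\<^sup>2)) ^ (6 * n) \<le> M * exp (- real n)"
proof -
  have "M \<ge> 0"
    using bound[of 0] \<open>A > 0\<close> by (metis abs_zero less_imp_le norm_ge_zero order_trans)
  have "cmod (poly p (of_real t)) * (A / sqrt (t\<^sup>2 + A\<^sup>2)) ^ (6 * n)
      \<le> M * (2 * \<bar>t\<bar> / A) ^ n * (A / sqrt (t\<^sup>2 + A\<^sup>2)) ^ (6 * n)"
    using poly_growth_outside_interval[OF deg \<open>0 < A\<close> bound \<open>A \<le> \<bar>t\<bar>\<close>] \<open>0 < A\<close>
    by (intro mult_right_mono) auto
  also have "\<dots> \<le> M * exp (- real n)"
    using damping_absorbs_growth[OF \<open>0 < A\<close> \<open>A \<le> \<bar>t\<bar>\<close>, of n] \<open>M \<ge> 0\<close>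
    by (simp add: mult.assoc mult_left_mono)
  finally show ?thesis .
qed

lemma norm_le_norm_add_imaginary:
  assumes "Im z \<ge> 0" and "b \<ge> 0"
  shows "cmod z \<le> cmod (z + \<i> * of_real b)"
  using assms by (auto simp: cmod_def intro!: power_mono)

lemma norm_poly_times_damping_le:
  fixes p :: "complex poly"
  assumes "degree p \<le> n" and "A \<ge> 0" and "Im z \<ge> 0" and "cmod z \<ge> 1"
  shows "cmod (poly p z * (\<i> * of_real A / (z + \<i> * of_real A)) ^ (6 * n))
    \<le> (\<Sum>k\<le>n. cmod (coeff p k)) * A ^ (6 * n)"
proof -
  define S where "S = (\<Sum>k\<le>n. cmod (coeff p k))"
  have "S \<ge> 0"
    by (simp add: S_def sum_nonneg)
  have poly_le: "cmod (poly p z) \<le> S * cmod z ^ n"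
    using norm_poly_le_coeff_sum[OF assms(1), of z] assms(4) by (simp add: S_def max_def)
  have "cmod (\<i> * of_real A / (z + \<i> * of_real A)) = A / cmod (z + \<i> * of_real A)"
    using \<open>A \<ge> 0\<close> by (simp add: norm_divide norm_mult)
  also have "\<dots> \<le> A / cmod z"
    using norm_le_norm_add_imaginary[OF assms(3,2)] assms(2,4) by (intro divide_left_mono mult_pos_pos) auto
  finally have "cmod (poly p z * (\<i> * of_real A / (z + \<i> * of_real A)) ^ (6 * n))
      \<le> S * cmod z ^ n * (A / cmod z) ^ (6 * n)"
    unfolding norm_mult norm_power using poly_le \<open>S \<ge> 0\<close> \<open>A \<ge> 0\<close>
    by (intro mult_mono power_mono) auto
  also have "\<dots> = S * A ^ (6 * n) * (cmod z ^ n / cmod z ^ (6 * n))"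
    by (simp add: power_divide)
  also have "\<dots> \<le> S * A ^ (6 * n)"
  proof -
    have ratio_le: "cmod z ^ n / cmod z ^ (6 * n) \<le> 1"
    proof (subst divide_le_eq_1_pos)
      show "0 < cmod z ^ (6 * n)"
        using assms(4) by (intro zero_less_power) linarith
    qed (use assms(4) power_increasing[of n "6 * n" "cmod z"] in auto)
    show ?thesis
      using mult_left_mono[OF ratio_le, of "S * A ^ (6 * n)"] \<open>S \<ge> 0\<close> \<open>A \<ge> 0\<close> by simp
  qed
  finally show ?thesis
    by (simp add: S_def)
qed

lemma norm_damped_poly_decay:
  fixes p :: "complex poly"
  assumes "degree p \<le> n" and "A \<ge> 0" and "Im z \<ge> 0" and "cmod z \<ge> 1" and "Re h \<ge> 0"
  shows "cmod (poly p z * (\<i> * of_real A / (z + \<i> * of_real A)) ^ (6 * n) * exp (- h) / (z + \<i>))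
    \<le> (\<Sum>k\<le>n. cmod (coeff p k)) * A ^ (6 * n) / cmod z"
proof -
  define D where "D = poly p z * (\<i> * of_real A / (z + \<i> * of_real A)) ^ (6 * n)"
  have "cmod D * exp (- Re h) \<le> cmod D"
    using \<open>Re h \<ge> 0\<close> by (intro mult_right_le_one_le) auto
  also have "\<dots> \<le> (\<Sum>k\<le>n. cmod (coeff p k)) * A ^ (6 * n)"
    unfolding D_def by (rule norm_poly_times_damping_le[OF assms(1-4)])
  finally have "cmod D * exp (- Re h) \<le> (\<Sum>k\<le>n. cmod (coeff p k)) * A ^ (6 * n)" .
  moreover have "cmod z \<le> cmod (z + \<i>)"
    using norm_le_norm_add_imaginary[OF assms(3), of 1] by simp
  ultimately show ?thesis
    unfolding D_def[symmetric] using assms(2,4)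
    by (auto simp: norm_mult norm_divide sum_nonneg intro!: frac_le)
qed

lemma damped_poly_real_bound:
  fixes p :: "complex poly" and \<phi> :: "real \<Rightarrow> real"
  assumes deg: "degree p \<le> n" and "1 \<le> A"
    and mono: "\<And>x y. 0 \<le> x \<Longrightarrow> x \<le> y \<Longrightarrow> \<phi> x \<le> \<phi> y"
    and nonneg: "\<And>x. x \<ge> 0 \<Longrightarrow> \<phi> x \<ge> 0" and "\<phi> A = real n" and "w \<ge> 0"
    and p_bound: "\<And>t. \<bar>t\<bar> \<le> A \<Longrightarrow> cmod (poly p (of_real t)) \<le> sqrt (t\<^sup>2 + 1) * w * exp (\<phi> \<bar>t\<bar>)"
  shows "cmod (poly p (of_real t)) * (A / sqrt (t\<^sup>2 + A\<^sup>2)) ^ (6 * n)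
      * exp (- Re (phi_majorant \<phi> A (of_real t))) \<le> sqrt (t\<^sup>2 + 1) * w"
proof (cases "\<bar>t\<bar> \<le> A")
  case True
  have "A \<le> sqrt (t\<^sup>2 + A\<^sup>2)"
    using \<open>1 \<le> A\<close> by (intro real_le_rsqrt) simp
  moreover have "0 < t\<^sup>2 + A\<^sup>2"
    using \<open>1 \<le> A\<close> by (intro add_nonneg_pos) auto
  ultimately have "(A / sqrt (t\<^sup>2 + A\<^sup>2)) ^ (6 * n) \<le> 1"
    using \<open>1 \<le> A\<close> by (intro power_le_one) (auto simp: divide_le_eq_1_pos)
  moreover have "exp (- Re (phi_majorant \<phi> A (of_real t))) \<le> exp (- \<phi> \<bar>t\<bar>)"
    using phi_le_Re_phi_majorant[OF mono nonneg True] by simp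
  ultimately have "cmod (poly p (of_real t)) * (A / sqrt (t\<^sup>2 + A\<^sup>2)) ^ (6 * n)
      * exp (- Re (phi_majorant \<phi> A (of_real t))) \<le> sqrt (t\<^sup>2 + 1) * w * exp (\<phi> \<bar>t\<bar>) * 1 * exp (- \<phi> \<bar>t\<bar>)"
    using p_bound[OF True] \<open>w \<ge> 0\<close> \<open>1 \<le> A\<close> by (intro mult_mono) auto
  then show ?thesis
    by (simp add: mult.assoc exp_minus_inverse)
next
  case False
  define M where "M = sqrt (1 + A\<^sup>2) * w * exp (real n)"
  have bound_M: "cmod (poly p (of_real x)) \<le> M" if "\<bar>x\<bar> \<le> A" for x
  proof -
    have "x\<^sup>2 \<le> A\<^sup>2"
      using that power_mono[of "\<bar>x\<bar>" A 2] by simp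
    then have "sqrt (x\<^sup>2 + 1) * w * exp (\<phi> \<bar>x\<bar>) \<le> M"
      unfolding M_def using mono[of "\<bar>x\<bar>" A] that \<open>\<phi> A = real n\<close> \<open>w \<ge> 0\<close>
      by (intro mult_mono) auto
    then show ?thesis
      using p_bound[OF that] by linarith
  qed
  define X where "X = cmod (poly p (of_real t)) * (A / sqrt (t\<^sup>2 + A\<^sup>2)) ^ (6 * n)"
  have "X \<le> M * exp (- real n)"
    unfolding X_def using False \<open>1 \<le> A\<close> by (intro poly_damped_outside_interval[OF deg _ bound_M]) auto
  also have "\<dots> = sqrt (1 + A\<^sup>2) * w"
    by (simp add: M_def mult.assoc exp_minus_inverse)
  also have "\<dots> \<le> sqrt (t\<^sup>2 + 1) * w"
    using False \<open>w \<ge> 0\<close> \<open>1 \<le> A\<close> power_mono[of A "\<bar>t\<bar>" 2] by (intro mult_right_mono) auto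
  finally have X_le: "X \<le> sqrt (t\<^sup>2 + 1) * w" .
  have "exp (- Re (phi_majorant \<phi> A (of_real t))) \<le> 1"
    using Re_phi_majorant_nonneg[where \<phi> = \<phi>, OF nonneg] \<open>1 \<le> A\<close> by simp
  moreover have "0 \<le> X"
    unfolding X_def using \<open>1 \<le> A\<close> by simp
  ultimately have "X * exp (- Re (phi_majorant \<phi> A (of_real t))) \<le> X"
    by (intro mult_right_le_one_le) auto
  then show ?thesis
    using X_le unfolding X_def by linarith
qed

lemma weighted_error_lower_bound:
  fixes p :: "complex poly" and \<phi> :: "real \<Rightarrow> real"
  assumes deg: "degree p \<le> n" and p_ii: "poly p \<i> = -1" and "1 \<le> A"
    and mono: "\<And>x y. 0 \<le> x \<Longrightarrow> x \<le> y \<Longrightarrow> \<phi> x \<le> \<phi> y"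
    and nonneg: "\<And>x. x \<ge> 0 \<Longrightarrow> \<phi> x \<ge> 0" and phi_A: "\<phi> A = real n"
    and p_bound: "\<And>t. \<bar>t\<bar> \<le> A \<Longrightarrow> cmod (poly p (of_real t)) \<le> cmod (of_real t - \<i>) * w * exp (\<phi> \<bar>t\<bar>)"
  shows "(A / (1 + A)) ^ (6 * n) * exp (- Re (phi_majorant \<phi> A \<i>)) / 2 \<le> w"
proof -
  define D where "D z = poly p z * (\<i> * of_real A / (z + \<i> * of_real A)) ^ (6 * n)" for z
  define F where "F z = D z * exp (- phi_majorant \<phi> A z) / (z + \<i>)" for z
  have norm_F: "cmod (F z) = cmod (D z) * exp (- Re (phi_majorant \<phi> A z)) / cmod (z + \<i>)" for z
    by (simp add: F_def norm_mult norm_divide)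
  have norm_real: "cmod (of_real t + \<i> * of_real b) = sqrt (t\<^sup>2 + b\<^sup>2)" for t b
    by (simp add: cmod_def)
  have "cmod (poly p 0) \<le> w * exp (\<phi> 0)"
    using p_bound[of 0] \<open>1 \<le> A\<close> by simp
  then have "0 \<le> w * exp (\<phi> 0)"
    by (rule order_trans[OF norm_ge_zero])
  then have "w \<ge> 0"
    by (simp add: zero_le_mult_iff)
  have p_bound': "cmod (poly p (of_real t)) \<le> sqrt (t\<^sup>2 + 1) * w * exp (\<phi> \<bar>t\<bar>)" if "\<bar>t\<bar> \<le> A" for t
    using p_bound[OF that] by (simp add: cmod_def)
  have hol: "F holomorphic_on {z. Im z > -1}"
    unfolding F_def[abs_def] D_def using \<open>1 \<le> A\<close>
    by (intro holomorphic_intros holomorphic_phi_majorant) (auto simp: complex_eq_iff)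
  have real_bound: "cmod (F (of_real t)) \<le> w" for t
  proof -
    have "cmod (poly p (of_real t)) * (A / sqrt (t\<^sup>2 + A\<^sup>2)) ^ (6 * n)
        * exp (- Re (phi_majorant \<phi> A (of_real t))) \<le> sqrt (t\<^sup>2 + 1) * w"
      by (rule damped_poly_real_bound[where \<phi> = \<phi>, OF deg \<open>1 \<le> A\<close> mono nonneg phi_A \<open>w \<ge> 0\<close> p_bound'])
    moreover have "cmod (D (of_real t)) = cmod (poly p (of_real t)) * (A / sqrt (t\<^sup>2 + A\<^sup>2)) ^ (6 * n)"
      using \<open>1 \<le> A\<close> by (simp add: D_def norm_mult norm_divide norm_power norm_real)
    moreover have "0 < sqrt (t\<^sup>2 + 1)"
      by (simp add: add_nonneg_pos)
    ultimately show ?thesis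
      using norm_real[of t 1] by (simp add: norm_F divide_le_eq mult.commute)
  qed
  have decay: "cmod (F z) \<le> (\<Sum>k\<le>n. cmod (coeff p k)) * A ^ (6 * n) / cmod z"
    if "Im z \<ge> 0" "cmod z \<ge> 1" for z
    unfolding F_def D_def using \<open>1 \<le> A\<close> Re_phi_majorant_nonneg[where \<phi> = \<phi>, OF nonneg _ that(1)]
    by (intro norm_damped_poly_decay[OF deg _ that]) auto
  have "cmod (F \<i>) \<le> w"
    by (rule halfplane_maximum_modulus[OF hol _ real_bound decay]) simp_all
  moreover have "cmod (\<i> + \<i> * complex_of_real A) = 1 + A"
    using norm_real[of 0 "1 + A"] \<open>1 \<le> A\<close> by (simp add: algebra_simps)
  ultimately show ?thesis
    using \<open>1 \<le> A\<close> by (simp add: norm_F D_def p_ii norm_mult norm_divide norm_power)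
qed

lemma E_approx_lower_bound:
  fixes \<phi> :: "real \<Rightarrow> real"
  assumes mono: "\<And>x y. 0 \<le> x \<Longrightarrow> x \<le> y \<Longrightarrow> \<phi> x \<le> \<phi> y"
    and nonneg: "\<And>x. x \<ge> 0 \<Longrightarrow> \<phi> x \<ge> 0"
    and growth: "\<And>k::nat. ((\<lambda>t. t ^ k / exp (\<phi> \<bar>t\<bar>)) \<longlongrightarrow> 0) at_infinity"
    and "1 \<le> n" and "1 \<le> A" and "\<phi> A = real n"
  shows "(A / (1 + A)) ^ (6 * n) * exp (- Re (phi_majorant \<phi> A \<i>)) / 2
    \<le> E_approx (\<lambda>x. exp (\<phi> \<bar>x\<bar>)) n"
  unfolding E_approx_def
proof (rule cINF_greatest)
  show "{Q :: complex poly. degree Q \<le> n - 1} \<noteq> {}"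
    by (auto intro: exI[of _ 0])
next
  fix Q :: "complex poly"
  assume "Q \<in> {Q. degree Q \<le> n - 1}"
  define w where "w = wnorm (\<lambda>x. exp (\<phi> \<bar>x\<bar>)) (\<lambda>x. 1 / (of_real x - \<i>) - poly Q (of_real x))"
  \<comment> \<open>\<open>p\<close> is \<open>-(z - \<i>)\<close> times the error \<open>1/(z - \<i>) - Q z\<close>, so it is a polynomial with \<open>p \<i> = -1\<close>.\<close>
  define p where "p = [:- \<i>, 1:] * Q - 1"
  have "degree ([:- \<i>, 1:] * Q) \<le> n"
    using degree_mult_le[of "[:- \<i>, 1:]" Q] \<open>Q \<in> _\<close> \<open>1 \<le> n\<close> by simp
  then have deg_p: "degree p \<le> n"
    unfolding p_def by (intro degree_diff_le) auto
  have p_ii: "poly p \<i> = -1"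
    by (simp add: p_def)
  have p_bound: "cmod (poly p (of_real t)) \<le> cmod (of_real t - \<i>) * w * exp (\<phi> \<bar>t\<bar>)" for t
  proof -
    have "of_real t - \<i> \<noteq> 0"
      by (simp add: complex_eq_iff)
    then have "poly p (of_real t) = - ((of_real t - \<i>) * (1 / (of_real t - \<i>) - poly Q (of_real t)))"
      by (simp add: p_def algebra_simps)
    moreover have "cmod (1 / (of_real t - \<i>) - poly Q (of_real t)) \<le> w * exp (\<phi> \<bar>t\<bar>)"
      using norm_le_wnorm[OF bdd_above_weighted_error[OF nonneg growth], of t]
      by (simp add: w_def divide_le_eq)
    ultimately show ?thesis
      by (simp add: norm_mult mult.assoc mult_left_mono)
  qed
  show "(A / (1 + A)) ^ (6 * n) * exp (- Re (phi_majorant \<phi> A \<i>)) / 2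
      \<le> wnorm (\<lambda>x. exp (\<phi> \<bar>x\<bar>)) (\<lambda>x. 1 / (of_real x - \<i>) - poly Q (of_real x))"
    using weighted_error_lower_bound[OF deg_p p_ii \<open>1 \<le> A\<close> mono nonneg \<open>\<phi> A = real n\<close> p_bound]
    by (simp add: w_def)
qed

lemma exp_neg_le_power_ratio:
  fixes A :: real
  assumes "0 < A"
  shows "exp (- (real k / A)) \<le> (A / (1 + A)) ^ k"
proof -
  have "(1 + 1 / A) ^ k \<le> exp (1 / A) ^ k"
    using exp_ge_add_one_self[of "1 / A"] assms by (intro power_mono) (auto simp: add.commute)
  also have "\<dots> = exp (real k / A)"
    by (simp flip: exp_of_nat_mult)
  finally have "inverse (exp (real k / A)) \<le> inverse ((1 + 1 / A) ^ k)"
    using assms by (intro le_imp_inverse_le zero_less_power) (auto intro: add_pos_pos)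
  moreover have "inverse (1 + 1 / A) = A / (1 + A)"
    using assms by (simp add: field_simps)
  ultimately show ?thesis
    by (simp add: exp_minus power_inverse[symmetric])
qed

lemma ln_E_approx_ge:
  fixes \<phi> :: "real \<Rightarrow> real"
  assumes cont: "continuous_on {0..} \<phi>"
    and mono: "\<And>x y. 0 \<le> x \<Longrightarrow> x \<le> y \<Longrightarrow> \<phi> x \<le> \<phi> y"
    and nonneg: "\<And>x. x \<ge> 0 \<Longrightarrow> \<phi> x \<ge> 0"
    and growth: "\<And>k::nat. ((\<lambda>t. t ^ k / exp (\<phi> \<bar>t\<bar>)) \<longlongrightarrow> 0) at_infinity"
    and "0 < \<phi> 0" and "1 \<le> n" and "1 \<le> A" and "\<phi> A = real n"
  shows "- (22 + 2 / \<phi> 0) * (integral {0..A} (\<lambda>x. \<phi> x / (x\<^sup>2 + 1)) + real n / A)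
    \<le> ln (E_approx (\<lambda>x. exp (\<phi> \<bar>x\<bar>)) n)"
proof -
  define I where "I = integral {0..A} (\<lambda>x. \<phi> x / (x\<^sup>2 + 1))"
  define R where "R = Re (phi_majorant \<phi> A \<i>)"
  have "\<phi> 0 / 2 \<le> I"
    unfolding I_def by (rule integral_phi_weight_ge[OF cont mono nonneg \<open>1 \<le> A\<close>])
  have "R \<le> 16 * I + 16 * (real n / A)"
    using Re_phi_majorant_ii_le[OF cont mono nonneg \<open>1 \<le> A\<close>] \<open>\<phi> A = real n\<close> by (simp add: R_def I_def)
  \<comment> \<open>The summand \<open>2 / \<phi> 0\<close> of the constant pays for the factor \<open>1/2 \<ge> exp (-1)\<close>.\<close>
  have "- (22 + 2 / \<phi> 0) * (I + real n / A) \<le> - (real (6 * n) / A) + - R + - 1"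
  proof -
    have "1 \<le> 2 / \<phi> 0 * I" and "0 \<le> 2 / \<phi> 0 * (real n / A)"
      using \<open>\<phi> 0 / 2 \<le> I\<close> \<open>0 < \<phi> 0\<close> \<open>1 \<le> A\<close> by (simp_all add: field_simps)
    moreover have "(22 + 2 / \<phi> 0) * (I + real n / A)
        = 22 * I + 22 * (real n / A) + 2 / \<phi> 0 * I + 2 / \<phi> 0 * (real n / A)"
      by (simp only: distrib_left distrib_right add.assoc)
    moreover have "real (6 * n) / A = 6 * (real n / A)"
      by simp
    ultimately show ?thesis
      using \<open>R \<le> 16 * I + 16 * (real n / A)\<close> \<open>\<phi> 0 / 2 \<le> I\<close> \<open>0 < \<phi> 0\<close> by linarith
  qed
  then have "exp (- (22 + 2 / \<phi> 0) * (I + real n / A)) \<le> exp (- (real (6 * n) / A)) * exp (- R) * exp (- 1)"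
    by (simp flip: exp_add)
  also have "\<dots> \<le> (A / (1 + A)) ^ (6 * n) * exp (- R) * (1 / 2)"
  proof -
    have "2 \<le> exp (1 :: real)"
      using exp_ge_add_one_self[of 1] by simp
    then have "exp (- 1) \<le> (1 / 2 :: real)"
      by (simp add: exp_minus field_simps)
    then show ?thesis
      using exp_neg_le_power_ratio[of A "6 * n"] \<open>1 \<le> A\<close> by (intro mult_mono) auto
  qed
  also have "\<dots> \<le> E_approx (\<lambda>x. exp (\<phi> \<bar>x\<bar>)) n"
    using E_approx_lower_bound[OF mono nonneg growth \<open>1 \<le> n\<close> \<open>1 \<le> A\<close> \<open>\<phi> A = real n\<close>]
    by (simp add: R_def)
  finally show ?thesis
    unfolding I_def by (subst ln_ge_iff) (auto intro: order_less_le_trans[OF exp_gt_zero])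
qed

theorem lemma5:
  fixes \<phi> :: "real \<Rightarrow> real"
  assumes cont: "continuous_on {0..} \<phi>"
    and mono: "strict_mono_on {0..} \<phi>"
    and pos: "\<And>x. x \<ge> 0 \<Longrightarrow> \<phi> x > 0"
    and growth: "\<And>k::nat. ((\<lambda>t. t ^ k / exp (\<phi> \<bar>t\<bar>)) \<longlongrightarrow> 0) at_infinity"
    and nonquasi: "\<not> ((\<lambda>t. ln (exp (\<phi> \<bar>t\<bar>)) / (1 + t\<^sup>2)) integrable_on UNIV)"
  shows "\<exists>C>0. \<forall>\<^sub>F n in sequentially.
           ln (E_approx (\<lambda>x. exp (\<phi> \<bar>x\<bar>)) n)
             \<ge> - C * (integral {0..(THE a. a \<ge> 0 \<and> \<phi> a = real n)} (\<lambda>x. \<phi> x / (x\<^sup>2 + 1))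
                      + real n / (THE a. a \<ge> 0 \<and> \<phi> a = real n))"
proof -
  have mono_le: "\<phi> x \<le> \<phi> y" if "0 \<le> x" "x \<le> y" for x y
    using strict_mono_on_leD[OF mono] that by auto
  have nonneg: "\<phi> x \<ge> 0" if "x \<ge> 0" for x
    using pos[OF that] by simp
  have "\<exists>b\<ge>0. y \<le> \<phi> b" for y
    using unbounded_of_weight_growth[OF nonneg] growth[of 1] by simp
  have "- (22 + 2 / \<phi> 0) * (integral {0..(THE a. a \<ge> 0 \<and> \<phi> a = real n)} (\<lambda>x. \<phi> x / (x\<^sup>2 + 1))
      + real n / (THE a. a \<ge> 0 \<and> \<phi> a = real n)) \<le> ln (E_approx (\<lambda>x. exp (\<phi> \<bar>x\<bar>)) n)"
    if "\<phi> 1 < real n" for n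
  proof -
    define A where "A = (THE a. a \<ge> 0 \<and> \<phi> a = real n)"
    have A: "A \<ge> 0" "\<phi> A = real n"
      using the_preimage_strict_mono_on[OF cont mono _ \<open>\<exists>b\<ge>0. real n \<le> \<phi> b\<close>] mono_le[of 0 1] that
      unfolding A_def by auto
    then have "1 \<le> A"
      using mono_le[of A 1] that by fastforce
    moreover have "1 \<le> n"
      using that pos[of 1] by simp
    ultimately show ?thesis
      using ln_E_approx_ge[OF cont mono_le nonneg growth pos[OF order_refl]] A unfolding A_def by auto
  qed
  moreover have "\<forall>\<^sub>F n in sequentially. \<phi> 1 < real n"
    using eventually_gt_at_top[of "nat \<lceil>\<phi> 1\<rceil>"] by (rule eventually_mono) linarith
  moreover have "0 < 22 + 2 / \<phi> 0"
    using pos[of 0] by (simp add: add_pos_pos)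
  ultimately show ?thesis
    by (intro exI[of _ "22 + 2 / \<phi> 0"]) (auto elim: eventually_mono)
qed

end
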